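(* For every point of $\mathcal H$ and all $j,k\ge0$, the vector field $X_k$ of the central system satisfies $$\frac{\partial H^{(j)}}{\partial t_k}=-\pi_-\big(H^{(j)}H^{(k)}\big),$$ where $\pi_-$ is the projection onto $\mathcal H_-$ along $\mathcal H_+$ defined at that point.
   Context: Let $z$ be a formal variable and $\mathcal L$ the space of formal Laurent series $\sum_{j\le N} l_j z^j$ (finitely many positive powers of $z$). Let $\mathcal H$ be the set of sequences $H=(H^{(k)})_{k\ge0}$ of elements of $\mathcal L$ with $H^{(0)}=1$ and, for $k\ge1$, $H^{(k)}=z^k+\sum_{l\ge1}H^k_l z^{-l}$; the coefficients $H^k_l$ are coordinates on $\mathcal H$, and we set $H^0_l=0$. The central system (CS) is the family of vector fields $X_j$, $j\ge1$, on $\mathcal H$, with associated times $t_j$, defined by $$\frac{\partial H^{(k)}}{\partial t_j}=H^{(j+k)}-H^{(j)}H^{(k)}+\sum_{l=1}^{k}H^j_lH^{(k-l)}+\sum_{l=1}^{j}H^k_lH^{(j-l)},\qquad k\ge0;$$ the right-hand side contains only negative powers of $z$, so this determines the components $X_j(H^k_l)$. For $H\in\mathcal H$ let $\mathcal H_+=\mathrm{span}\{H^{(k)}:k\ge0\}$ (finite linear combinations) and $\mathcal H_-=\{\sum_{l\ge1}c_lz^{-l}\}$, so that $\mathcal L=\mathcal H_+\oplus\mathcal H_-$; let $\pi_\pm$ be the corresponding projections. *)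

theory Defs
  imports Complex_Main
begin

text \<open>Formal Laurent series sum_{n} l_n z^n are represented by their coefficient
functions int => complex (only those with finitely many nonzero positive
coefficients, i.e. bounded above, are Laurent series in the sense of the paper).\<close>

type_synonym lser = "int \<Rightarrow> complex"

definition lser_ub :: "lser \<Rightarrow> nat" where
  "lser_ub f = (LEAST N::nat. \<forall>m. m > int N \<longrightarrow> f m = 0)"

text \<open>Product of two Laurent series bounded above: the coefficient of z^n is the
finite sum over a + b = n with a \<le> ub f, b \<le> ub g.\<close>
definition lmul :: "lser \<Rightarrow> lser \<Rightarrow> lser" where
  "lmul f g = (\<lambda>n. \<Sum>a\<in>{n - int (lser_ub g) .. int (lser_ub f)}. f a * g (n - a))"

text \<open>A point of the space \<H> is given by its coordinates c k l = H^k_l (k,l \<ge> 1);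
values of c at k = 0 or l = 0 are irrelevant.  Convention H^0_l = 0.\<close>
definition coord :: "(nat \<Rightarrow> nat \<Rightarrow> complex) \<Rightarrow> nat \<Rightarrow> nat \<Rightarrow> complex" where
  "coord c k l = (if k = 0 then 0 else c k l)"

definition Hser :: "(nat \<Rightarrow> nat \<Rightarrow> complex) \<Rightarrow> nat \<Rightarrow> lser" where
  "Hser c k = (if k = 0 then (\<lambda>n. if n = 0 then 1 else 0)
               else (\<lambda>n. if n = int k then 1 else if n < 0 then c k (nat (- n)) else 0))"

text \<open>Right-hand side of the central system for dH^(k)/dt_j.\<close>
definition CS_rhs :: "(nat \<Rightarrow> nat \<Rightarrow> complex) \<Rightarrow> nat \<Rightarrow> nat \<Rightarrow> lser" where
  "CS_rhs c j k = (\<lambda>n. Hser c (j + k) n - lmul (Hser c j) (Hser c k) n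
      + (\<Sum>l\<in>{1..k}. coord c j l * Hser c (k - l) n)
      + (\<Sum>l\<in>{1..j}. coord c k l * Hser c (j - l) n))"

text \<open>Components of the vector field X_j: X_j(H^k_l) = coefficient of z^{-l}.\<close>
definition CS_field :: "(nat \<Rightarrow> nat \<Rightarrow> complex) \<Rightarrow> nat \<Rightarrow> nat \<Rightarrow> nat \<Rightarrow> complex" where
  "CS_field c j k l = CS_rhs c j k (- int l)"

text \<open>dH^(k)/dt_j as a Laurent series (H^(k) has constant nonnegative part).\<close>
definition dH :: "(nat \<Rightarrow> nat \<Rightarrow> complex) \<Rightarrow> nat \<Rightarrow> nat \<Rightarrow> lser" where
  "dH c j k = (\<lambda>n. if n < 0 then CS_field c j k (nat (- n)) else 0)"

definition Hplus :: "(nat \<Rightarrow> nat \<Rightarrow> complex) \<Rightarrow> lser set" where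
  "Hplus c = {f. \<exists>S a. finite S \<and> f = (\<lambda>n. \<Sum>k\<in>S. a k * Hser c k n)}"

definition Hminus :: "lser set" where
  "Hminus = {f. \<forall>n\<ge>0. f n = 0}"

definition pi_minus :: "(nat \<Rightarrow> nat \<Rightarrow> complex) \<Rightarrow> lser \<Rightarrow> lser" where
  "pi_minus c f = (THE g. g \<in> Hminus \<and> f - g \<in> Hplus c)"

end

theory Submission
  imports Defs
begin

text \<open>The right-hand side of the central system has no nonnegative powers of z, and it
differs from -H^(k)H^(j) by a finite combination of the H^(m). Hence
H^(j)H^(k) = (H^(j)H^(k) + dH^(j)/dt_k) - dH^(j)/dt_k splits H^(j)H^(k) into a part in \<H>_+
and a part in \<H>_-. This is the splitting defining \<pi>_-, because an element of \<H>_+ is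
determined by its nonnegative coefficients (the coefficient of z^m is the coefficient of
H^(m)), so \<H>_+ and \<H>_- meet only in 0.\<close>

lemma lser_ub_Hser: "lser_ub (Hser c k) = k"
  unfolding lser_ub_def
proof (rule Least_equality)
  show "\<forall>m>int k. Hser c k m = 0" by (auto simp: Hser_def)
next
  fix N :: nat assume "\<forall>m>int N. Hser c k m = 0"
  then have "Hser c k (int k) = 0 \<or> \<not> int k > int N" by blast
  then show "k \<le> N" by (auto simp: Hser_def split: if_splits)
qed

lemma Hser_nonneg: "n \<ge> 0 \<Longrightarrow> Hser c m n = (if n = int m then 1 else 0)"
  by (auto simp: Hser_def)

lemma lmul_commute: "lmul f g = lmul g f"
proof
  show "lmul f g n = lmul g f n" for n
    unfolding lmul_def by (rule sum.reindex_bij_witness[where i="\<lambda>b. n - b" and j="\<lambda>a. n - a"]) auto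
qed

lemma lmul_Hser_nonneg:
  assumes "n \<ge> 0"
  shows "lmul (Hser c j) (Hser c k) n = (if n = int j + int k then 1 else 0)
     + (if n < int j then coord c k (nat (int j - n)) else 0)
     + (if n < int k then coord c j (nat (int k - n)) else 0)"
proof -
  have term_split: "Hser c j a * Hser c k (n - a) =
      (if n < int k then if a = n - int k then coord c j (nat (int k - n)) else 0 else 0)
      + (if a = int j then Hser c k (n - int j) else 0)" for a
    using assms by (auto simp: Hser_def coord_def)
  have "lmul (Hser c j) (Hser c k) n
      = (if n < int k then coord c j (nat (int k - n)) else 0)
      + (if n - int k \<le> int j then Hser c k (n - int j) else 0)"
    by (simp add: lmul_def lser_ub_Hser term_split sum.distrib)
  also have "\<dots> = (if n = int j + int k then 1 else 0)
     + (if n < int j then coord c k (nat (int j - n)) else 0)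
     + (if n < int k then coord c j (nat (int k - n)) else 0)"
    using assms by (auto simp: Hser_def coord_def)
  finally show ?thesis .
qed

lemma sum_coord_Hser_nonneg:
  assumes "n \<ge> 0"
  shows "(\<Sum>l\<in>{1..j}. coord c k l * Hser c (j - l) n)
       = (if n < int j then coord c k (nat (int j - n)) else 0)"
proof -
  have "(\<Sum>l\<in>{1..j}. coord c k l * Hser c (j - l) n)
      = (\<Sum>l\<in>{1..j}. if l = j - nat n then coord c k l else 0)"
    by (rule sum.cong) (use assms in \<open>auto simp: Hser_nonneg\<close>)
  also have "\<dots> = (if n < int j then coord c k (nat (int j - n)) else 0)"
  proof -
    have "j - nat n \<in> {1..j} \<longleftrightarrow> n < int j"
      using assms by auto
    then show ?thesis
      using assms by (simp add: nat_diff_distrib')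
  qed
  finally show ?thesis .
qed

lemma CS_rhs_nonneg:
  assumes "n \<ge> 0"
  shows "CS_rhs c j k n = 0"
  unfolding CS_rhs_def sum_coord_Hser_nonneg[OF assms] lmul_Hser_nonneg[OF assms]
  unfolding Hser_nonneg[OF assms]
  by simp

lemma dH_eq_CS_rhs: "dH c j k = CS_rhs c j k"
  by (auto simp: dH_def CS_field_def CS_rhs_nonneg)

lemma CS_rhs_in_Hminus: "CS_rhs c j k \<in> Hminus"
  by (simp add: Hminus_def CS_rhs_nonneg)

lemma Hplus_zero: "(\<lambda>n. 0) \<in> Hplus c"
  unfolding Hplus_def by (intro CollectI exI[of _ "{}"]) simp

lemma Hplus_Hser: "Hser c m \<in> Hplus c"
  unfolding Hplus_def by (intro CollectI exI[of _ "{m}"] exI[of _ "\<lambda>_. 1"]) simp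

lemma sum_extend_coeffs:
  fixes a h :: "'a \<Rightarrow> 'b::semiring_0"
  shows "finite T \<Longrightarrow> S \<subseteq> T \<Longrightarrow> (\<Sum>k\<in>S. a k * h k) = (\<Sum>k\<in>T. (if k \<in> S then a k else 0) * h k)"
  by (rule sum.mono_neutral_cong_left) auto

lemma Hplus_add:
  assumes "f \<in> Hplus c" "g \<in> Hplus c"
  shows "(\<lambda>n. f n + g n) \<in> Hplus c"
proof -
  obtain S a where S: "finite S" "f = (\<lambda>n. \<Sum>k\<in>S. a k * Hser c k n)"
    using assms(1) by (auto simp: Hplus_def)
  obtain T b where T: "finite T" "g = (\<lambda>n. \<Sum>k\<in>T. b k * Hser c k n)"
    using assms(2) by (auto simp: Hplus_def)
  define a' where "a' k = (if k \<in> S then a k else 0)" for k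
  define b' where "b' k = (if k \<in> T then b k else 0)" for k
  have "f n = (\<Sum>k\<in>S \<union> T. a' k * Hser c k n)" for n
    unfolding S(2) a'_def using S T by (intro sum_extend_coeffs) auto
  moreover have "g n = (\<Sum>k\<in>S \<union> T. b' k * Hser c k n)" for n
    unfolding T(2) b'_def using S T by (intro sum_extend_coeffs) auto
  ultimately have "(\<lambda>n. f n + g n) = (\<lambda>n. \<Sum>k\<in>S \<union> T. (a' k + b' k) * Hser c k n)"
    by (simp add: distrib_right sum.distrib)
  then show ?thesis
    unfolding Hplus_def using S T by (intro CollectI exI[of _ "S \<union> T"]) auto
qed

lemma Hplus_scale:
  assumes "f \<in> Hplus c"
  shows "(\<lambda>n. x * f n) \<in> Hplus c"
proof -
  obtain S a where S: "finite S" "f = (\<lambda>n. \<Sum>k\<in>S. a k * Hser c k n)"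
    using assms by (auto simp: Hplus_def)
  then have "(\<lambda>n. x * f n) = (\<lambda>n. \<Sum>k\<in>S. (x * a k) * Hser c k n)"
    by (simp add: sum_distrib_left mult.assoc)
  then show ?thesis
    unfolding Hplus_def using S by (intro CollectI exI[of _ S]) auto
qed

lemma Hplus_diff: "f \<in> Hplus c \<Longrightarrow> g \<in> Hplus c \<Longrightarrow> f - g \<in> Hplus c"
  using Hplus_add[of f c "\<lambda>n. - 1 * g n"] Hplus_scale[of g c "- 1"] by (simp add: fun_diff_def)

lemma Hplus_sum:
  "finite L \<Longrightarrow> (\<And>l. l \<in> L \<Longrightarrow> F l \<in> Hplus c) \<Longrightarrow> (\<lambda>n. \<Sum>l\<in>L. F l n) \<in> Hplus c"
  by (induction L rule: finite_induct) (simp_all add: Hplus_zero Hplus_add)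

lemma Hplus_Hminus_eq_zero:
  assumes "f \<in> Hplus c" "f \<in> Hminus"
  shows "f = (\<lambda>n. 0)"
proof -
  obtain S a where S: "finite S" "f = (\<lambda>n. \<Sum>k\<in>S. a k * Hser c k n)"
    using assms(1) by (auto simp: Hplus_def)
  have coeffs_vanish: "a m = 0" if "m \<in> S" for m
  proof -
    have "f (int m) = (\<Sum>k\<in>S. if k = m then a k else 0)"
      unfolding S(2) by (rule sum.cong) (simp_all add: Hser_nonneg)
    also have "\<dots> = a m"
      using S(1) that by simp
    finally show ?thesis
      using assms(2) by (simp add: Hminus_def)
  qed
  show ?thesis
    unfolding S(2) by (intro ext sum.neutral) (simp add: coeffs_vanish)
qed

lemma pi_minus_eqI:
  assumes "g \<in> Hminus" "f - g \<in> Hplus c"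
  shows "pi_minus c f = g"
  unfolding pi_minus_def
proof (rule the_equality)
  show "g \<in> Hminus \<and> f - g \<in> Hplus c"
    using assms by blast
next
  fix h assume h: "h \<in> Hminus \<and> f - h \<in> Hplus c"
  have "(f - g) - (f - h) \<in> Hplus c"
    using Hplus_diff[OF assms(2)] h by blast
  moreover have "(f - g) - (f - h) \<in> Hminus"
    using assms(1) h by (simp add: Hminus_def)
  ultimately have "(f - g) - (f - h) = (\<lambda>n. 0)"
    by (rule Hplus_Hminus_eq_zero)
  then show "h = g"
    by (simp add: fun_eq_iff)
qed

lemma lmul_Hser_plus_CS_rhs_in_Hplus:
  "(\<lambda>n. lmul (Hser c j) (Hser c k) n + CS_rhs c j k n) \<in> Hplus c"
proof -
  have "(\<lambda>n. lmul (Hser c j) (Hser c k) n + CS_rhs c j k n)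
      = (\<lambda>n. Hser c (j + k) n + (\<Sum>l\<in>{1..k}. coord c j l * Hser c (k - l) n)
          + (\<Sum>l\<in>{1..j}. coord c k l * Hser c (j - l) n))"
    by (simp add: CS_rhs_def add.assoc)
  also have "\<dots> \<in> Hplus c"
    by (intro Hplus_add Hplus_sum Hplus_scale Hplus_Hser) auto
  finally show ?thesis .
qed

theorem mainTheorem2:
  fixes c :: "nat \<Rightarrow> nat \<Rightarrow> complex" and j k :: nat
  shows "dH c k j = - pi_minus c (lmul (Hser c j) (Hser c k))"
proof -
  have "pi_minus c (lmul (Hser c k) (Hser c j)) = - CS_rhs c k j"
  proof (rule pi_minus_eqI)
    show "- CS_rhs c k j \<in> Hminus"
      using CS_rhs_in_Hminus[of c k j] by (simp add: Hminus_def)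
    show "lmul (Hser c k) (Hser c j) - - CS_rhs c k j \<in> Hplus c"
      using lmul_Hser_plus_CS_rhs_in_Hplus[of c k j] by (simp add: fun_diff_def)
  qed
  then show ?thesis
    by (simp add: dH_eq_CS_rhs lmul_commute[of "Hser c j"] fun_Compl_def)
qed

end
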